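(* Let $n$ be such that $n/2$ is odd, let $\Omega\subseteq\mathbb{R}^n$ be open, let $\underline{f}$ be a vector-valued function on $\Omega$ and $\lambda\in\mathbb{C}$. With $A=M^{ie_N}\partial_{\underline{x}}^{-\underline{f}}$ and $B=M^{ie_N}\partial_{\underline{x}}^{\underline{f}}$ acting on $\mathbb{C}_n$-valued functions on $\Omega$, one has (i) $\ker(A\pm\lambda)=\ker\left(\partial_{\underline{x}}-M^{\underline{f}\mp\lambda ie_N}\right)$; (ii) $\ker(B\pm\lambda)=\ker\left(\partial_{\underline{x}}+M^{\underline{f}\pm\lambda ie_N}\right)$.
   Context: $\mathbb{R}_{0,n}$ is the real Clifford algebra generated by an orthonormal basis $e_1,\dots,e_n$ of $\mathbb{R}^n$ with relations $e_je_k+e_ke_j=-2\delta_{jk}$; $\mathbb{C}_n=\mathbb{R}_{0,n}\otimes\mathbb{C}$, with $i$ the complex unit. $e_N=e_1e_2\cdots e_n$ is the pseudo-scalar. The Dirac operator is $\partial_{\underline{x}}=\sum_{j=1}^n e_j\partial_{x_j}$, acting from the left. For a function $f$, $M^f$ is right multiplication: $M^fg=gf$; $\partial_{\underline{x}}^{\pm f}=\partial_{\underline{x}}\pm M^f$. *)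

theory Defs
  imports "HOL-Analysis.Analysis"
begin

text \<open>Complex Clifford algebra C_n = R_{0,n} (x) C with generators e_j, j :: 'n, where
  'n is a finite linearly ordered index type with CARD('n) = n.  An element is
  represented by its coordinates w.r.t. the blade basis e_A (A a subset of 'n, the
  product of the e_j, j in A, in increasing order).\<close>

type_synonym 'n cl = "'n set \<Rightarrow> complex"
type_synonym 'n cl_pt = "(real, 'n) vec"

definition blade_sign :: "'n::linorder set \<Rightarrow> 'n set \<Rightarrow> complex" where
  "blade_sign A B = (-1) ^ (card {(a, b). a \<in> A \<and> b \<in> B \<and> b < a} + card (A \<inter> B))"

definition cl_mult :: "'n::{finite,linorder} cl \<Rightarrow> 'n cl \<Rightarrow> 'n cl" where
  "cl_mult x y = (\<lambda>C. \<Sum>A\<in>UNIV. \<Sum>B\<in>UNIV.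
      if (A - B) \<union> (B - A) = C then blade_sign A B * x A * y B else 0)"

definition cl_add :: "'n cl \<Rightarrow> 'n cl \<Rightarrow> 'n cl" where
  "cl_add x y = (\<lambda>A. x A + y A)"

definition cl_sub :: "'n cl \<Rightarrow> 'n cl \<Rightarrow> 'n cl" where
  "cl_sub x y = (\<lambda>A. x A - y A)"

definition cl_scale :: "complex \<Rightarrow> 'n cl \<Rightarrow> 'n cl" where
  "cl_scale c x = (\<lambda>A. c * x A)"

definition cl_zero :: "'n cl" where
  "cl_zero = (\<lambda>A. 0)"

definition cl_e :: "'n \<Rightarrow> 'n cl" where
  "cl_e j = (\<lambda>A. if A = {j} then 1 else 0)"

definition i_eN :: "'n::finite cl" where
  "i_eN = (\<lambda>A. if A = UNIV then \<i> else 0)"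

definition cl_vec :: "('n \<Rightarrow> real) \<Rightarrow> 'n cl" where
  "cl_vec v = (\<lambda>A. if card A = 1 then complex_of_real (v (the_elem A)) else 0)"

definition cl_partial :: "'n::finite \<Rightarrow> ('n cl_pt \<Rightarrow> 'n cl) \<Rightarrow> 'n cl_pt \<Rightarrow> 'n cl" where
  "cl_partial j g x = (\<lambda>A. vector_derivative (\<lambda>t. g (x + t *\<^sub>R axis j 1) A) (at 0))"

definition dirac :: "(('n::{finite,linorder}) cl_pt \<Rightarrow> 'n cl) \<Rightarrow> 'n cl_pt \<Rightarrow> 'n cl" where
  "dirac g x = (\<lambda>A. \<Sum>j\<in>UNIV. cl_mult (cl_e j) (cl_partial j g x) A)"

definition rmult :: "(('n::{finite,linorder}) cl_pt \<Rightarrow> 'n cl) \<Rightarrow> ('n cl_pt \<Rightarrow> 'n cl) \<Rightarrow> 'n cl_pt \<Rightarrow> 'n cl" where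
  "rmult h g = (\<lambda>x. cl_mult (g x) (h x))"

definition cl_diff_on :: "(('n::finite) cl_pt) set \<Rightarrow> ('n cl_pt \<Rightarrow> 'n cl) \<Rightarrow> bool" where
  "cl_diff_on \<Omega> g \<longleftrightarrow> (\<forall>A. \<forall>x\<in>\<Omega>. (\<lambda>y. g y A) differentiable (at x))"

definition cl_ker :: "(('n::finite) cl_pt) set \<Rightarrow> (('n cl_pt \<Rightarrow> 'n cl) \<Rightarrow> ('n cl_pt \<Rightarrow> 'n cl))
    \<Rightarrow> ('n cl_pt \<Rightarrow> 'n cl) set" where
  "cl_ker \<Omega> L = {g. cl_diff_on \<Omega> g \<and> (\<forall>x\<in>\<Omega>. L g x = cl_zero)}"

text \<open>A = M^{i e_N} (d - M^f) and B = M^{i e_N} (d + M^f), f vector-valued\<close>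
definition opA :: "((real, 'n::{finite,linorder}) vec \<Rightarrow> ('n \<Rightarrow> real))
    \<Rightarrow> ('n cl_pt \<Rightarrow> 'n cl) \<Rightarrow> 'n cl_pt \<Rightarrow> 'n cl" where
  "opA f g x = cl_mult (cl_sub (dirac g x) (rmult (\<lambda>y. cl_vec (f y)) g x)) i_eN"

definition opB :: "((real, 'n::{finite,linorder}) vec \<Rightarrow> ('n \<Rightarrow> real))
    \<Rightarrow> ('n cl_pt \<Rightarrow> 'n cl) \<Rightarrow> 'n cl_pt \<Rightarrow> 'n cl" where
  "opB f g x = cl_mult (cl_add (dirac g x) (rmult (\<lambda>y. cl_vec (f y)) g x)) i_eN"

end

theory Submission
  imports Defs
begin

text \<open>Right multiplication by i e_N acts on blade coordinates as x \<mapsto> (C \<mapsto> \<sigma>(C) x(-C)) with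
  \<sigma>(C) \<sigma>(-C) = -(-1)^(n(n+1)/2), which is 1 when n/2 is odd; so (i e_N)^2 = 1 and right
  multiplication by i e_N is a linear involution.  Applying it to Y i e_N \<pm> \<lambda> g, where
  Y = \<partial> g \<mp> g f, shows that this vanishes exactly when Y \<pm> \<lambda> g i e_N does, and the latter is
  \<partial> g \<mp> g (f \<mp> \<lambda> i e_N) up to sign.\<close>

lemma cl_mult_add_left: "cl_mult (cl_add x y) z = cl_add (cl_mult x z) (cl_mult y z)"
  unfolding cl_mult_def cl_add_def
  by (auto simp: fun_eq_iff sum.distrib[symmetric] algebra_simps intro!: sum.cong)

lemma cl_mult_scale_left: "cl_mult (cl_scale c x) y = cl_scale c (cl_mult x y)"
  unfolding cl_mult_def cl_scale_def
  by (auto simp: fun_eq_iff sum_distrib_left algebra_simps intro!: sum.cong)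

lemma cl_mult_zero_left: "cl_mult cl_zero y = cl_zero"
  unfolding cl_mult_def cl_zero_def by (simp add: fun_eq_iff sum.neutral)

lemma cl_mult_sub_right: "cl_mult x (cl_sub y z) = cl_sub (cl_mult x y) (cl_mult x z)"
  unfolding cl_mult_def cl_sub_def
  by (auto simp: fun_eq_iff sum_subtractf[symmetric] algebra_simps intro!: sum.cong)

lemma cl_mult_add_right: "cl_mult x (cl_add y z) = cl_add (cl_mult x y) (cl_mult x z)"
  unfolding cl_mult_def cl_add_def
  by (auto simp: fun_eq_iff sum.distrib[symmetric] algebra_simps intro!: sum.cong)

lemma cl_mult_scale_right: "cl_mult x (cl_scale c y) = cl_scale c (cl_mult x y)"
  unfolding cl_mult_def cl_scale_def
  by (auto simp: fun_eq_iff sum_distrib_left algebra_simps intro!: sum.cong)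

lemma cl_mult_i_eN_apply: "cl_mult x i_eN C = blade_sign (- C) UNIV * \<i> * x (- C)"
proof -
  have "cl_mult x i_eN C = (\<Sum>A\<in>UNIV. \<Sum>B\<in>UNIV. if B = UNIV then
      (if (A - B) \<union> (B - A) = C then blade_sign A B * x A * \<i> else 0) else 0)"
    unfolding cl_mult_def i_eN_def by (intro sum.cong refl) auto
  also have "\<dots> = (\<Sum>A\<in>UNIV. if A = - C then blade_sign A UNIV * x A * \<i> else 0)"
    by (intro sum.cong refl) (auto simp: sum.delta')
  finally show ?thesis by (simp add: sum.delta')
qed

lemma card_less_pairs:
  "2 * card {(a, b::'n::{finite,linorder}). b < a} + CARD('n) = CARD('n) * CARD('n)"
proof -
  let ?P = "{(a, b::'n). b < a}" and ?Q = "{(a, b::'n). a < b}" and ?D = "{(a, b::'n). a = b}"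
  have "card ?Q = card ?P"
    by (rule bij_betw_same_card[of "\<lambda>(a, b). (b, a)"])
      (auto simp: bij_betw_def inj_on_def image_def)
  moreover have "card ?D = CARD('n)"
    by (rule bij_betw_same_card[of "\<lambda>(a, b). a"]) (auto simp: bij_betw_def inj_on_def image_def)
  moreover have "card (?P \<union> ?Q \<union> ?D) = card ?P + card ?Q + card ?D"
    by (subst card_Un_disjoint; auto simp: card_Un_disjoint)+
  moreover have "?P \<union> ?Q \<union> ?D = UNIV" by auto
  ultimately show ?thesis
    using card_cartesian_product[of "UNIV :: 'n set" "UNIV :: 'n set"] by simp
qed

lemma blade_sign_compl_UNIV:
  fixes C :: "'n::{finite,linorder} set"
  shows "blade_sign (- C) UNIV * blade_sign C UNIV
     = (-1) ^ (card {(a, b::'n). b < a} + CARD('n))"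
proof -
  have pairs: "card {(a, b). a \<in> A \<and> b \<in> (UNIV::'n set) \<and> b < a}
      + card {(a, b). a \<in> - A \<and> b \<in> (UNIV::'n set) \<and> b < a} = card {(a, b::'n). b < a}"
    for A :: "'n set"
  proof -
    have "{(a, b::'n). b < a}
        = {(a, b). a \<in> A \<and> b \<in> UNIV \<and> b < a} \<union> {(a, b). a \<in> - A \<and> b \<in> UNIV \<and> b < a}"
      by auto
    then show ?thesis by (simp add: card_Un_disjoint[symmetric] disjoint_iff)
  qed
  let ?q = "\<lambda>A. card {(a, b). a \<in> A \<and> b \<in> (UNIV::'n set) \<and> b < a}"
  have "card (- C \<union> C) = card (- C) + card C"
    by (rule card_Un_disjoint) auto
  then have "card (- C) + card C = CARD('n)"
    by (simp add: Compl_partition2)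
  then have "?q (- C) + card (- C) + (?q C + card C) = card {(a, b::'n). b < a} + CARD('n)"
    using pairs[of C] by simp
  moreover have "blade_sign (- C) UNIV * blade_sign C UNIV
      = (-1) ^ (?q (- C) + card (- C) + (?q C + card C))"
    unfolding blade_sign_def power_add by simp
  ultimately show ?thesis by simp
qed

lemma cl_mult_i_eN_involutive:
  fixes x :: "'n::{finite,linorder} cl"
  assumes "even CARD('n)" and "odd (CARD('n) div 2)"
  shows "cl_mult (cl_mult x i_eN) i_eN = x"
proof -
  let ?p = "card {(a, b::'n). b < a}"
  obtain k where k: "CARD('n) = 2 * k" and "odd k" using assms by auto
  have "?p + CARD('n) = 2 * (k * k) + k" using card_less_pairs[where 'n='n] k by simp
  then have "odd (?p + CARD('n))" using \<open>odd k\<close> by simp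
  then have "blade_sign (- C) UNIV * blade_sign C UNIV = -1" for C :: "'n set"
    by (simp add: blade_sign_compl_UNIV)
  then show ?thesis
    by (simp add: fun_eq_iff cl_mult_i_eN_apply algebra_simps)
qed

lemma cl_mult_i_eN_eq_zero_iff:
  fixes y z :: "'n::{finite,linorder} cl"
  assumes "even CARD('n)" and "odd (CARD('n) div 2)"
  shows "cl_add (cl_mult y i_eN) (cl_scale c z) = cl_zero
     \<longleftrightarrow> cl_add y (cl_scale c (cl_mult z i_eN)) = cl_zero"
proof -
  note involutive = cl_mult_i_eN_involutive[OF assms]
  have "cl_mult (cl_add (cl_mult y i_eN) (cl_scale c z)) i_eN = cl_add y (cl_scale c (cl_mult z i_eN))"
    and "cl_mult (cl_add y (cl_scale c (cl_mult z i_eN))) i_eN = cl_add (cl_mult y i_eN) (cl_scale c z)"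
    by (simp_all add: cl_mult_add_left cl_mult_scale_left involutive)
  then show ?thesis by (metis cl_mult_zero_left)
qed

lemma cl_ker_cong:
  assumes "\<And>g x. L1 g x = cl_zero \<longleftrightarrow> L2 g x = cl_zero"
  shows "cl_ker \<Omega> L1 = cl_ker \<Omega> L2"
  unfolding cl_ker_def using assms by auto

lemma cl_sub_scale: "cl_sub x (cl_scale c y) = cl_add x (cl_scale (- c) y)"
  by (simp add: cl_sub_def cl_add_def cl_scale_def fun_eq_iff)

lemma cl_scale_scale: "cl_scale a (cl_scale b x) = cl_scale (a * b) x"
  by (simp add: cl_scale_def fun_eq_iff)

text \<open>These bring both sides of each kernel condition into the shape y + c z used by
  cl_mult_i_eN_eq_zero_iff.\<close>

lemma cl_sub_add_scaled: "cl_sub x (cl_add y z) = cl_add (cl_sub x y) (cl_scale (- 1) z)"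
  and cl_sub_sub_scaled: "cl_sub x (cl_sub y z) = cl_add (cl_sub x y) (cl_scale 1 z)"
  and cl_add_add_scaled: "cl_add x (cl_add y z) = cl_add (cl_add x y) (cl_scale 1 z)"
  and cl_add_sub_scaled: "cl_add x (cl_sub y z) = cl_add (cl_add x y) (cl_scale (- 1) z)"
  by (simp_all add: cl_sub_def cl_add_def cl_scale_def fun_eq_iff)

theorem lemma7p1:
  fixes \<Omega> :: "(real, 'n::{finite,linorder}) vec set"
    and f :: "(real, 'n) vec \<Rightarrow> ('n \<Rightarrow> real)"
    and lam :: complex
  assumes "even CARD('n)" and "odd (CARD('n) div 2)"
    and "open \<Omega>"
  shows
    "cl_ker \<Omega> (\<lambda>g x. cl_add (opA f g x) (cl_scale lam (g x)))
       = cl_ker \<Omega> (\<lambda>g x. cl_sub (dirac g x)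
           (rmult (\<lambda>y. cl_sub (cl_vec (f y)) (cl_scale lam i_eN)) g x)) \<and>
    cl_ker \<Omega> (\<lambda>g x. cl_sub (opA f g x) (cl_scale lam (g x)))
       = cl_ker \<Omega> (\<lambda>g x. cl_sub (dirac g x)
           (rmult (\<lambda>y. cl_add (cl_vec (f y)) (cl_scale lam i_eN)) g x)) \<and>
    cl_ker \<Omega> (\<lambda>g x. cl_add (opB f g x) (cl_scale lam (g x)))
       = cl_ker \<Omega> (\<lambda>g x. cl_add (dirac g x)
           (rmult (\<lambda>y. cl_add (cl_vec (f y)) (cl_scale lam i_eN)) g x)) \<and>
    cl_ker \<Omega> (\<lambda>g x. cl_sub (opB f g x) (cl_scale lam (g x)))
       = cl_ker \<Omega> (\<lambda>g x. cl_add (dirac g x)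
           (rmult (\<lambda>y. cl_sub (cl_vec (f y)) (cl_scale lam i_eN)) g x))"
  using cl_mult_i_eN_eq_zero_iff[OF assms(1,2)]
  by (intro conjI cl_ker_cong)
    (simp_all add: opA_def opB_def rmult_def cl_sub_scale cl_mult_add_right cl_mult_sub_right
      cl_mult_scale_right cl_scale_scale
      cl_sub_add_scaled cl_sub_sub_scaled cl_add_add_scaled cl_add_sub_scaled)

end
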